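(* Let $L=Rd$ with $R,d$ positive integers and let $\Phi,\Psi$ be two unitary $L\times L$ matrices, partitioned into consecutive column-blocks $\Phi[\ell],\Psi[\ell]$ of size $L\times d$, $1\le\ell\le R$. Then $$\mu_{\mathrm B}(\Phi,\Psi)=\max_{\ell,r}\frac1d\rho(\Phi^H[\ell]\Psi[r])\ \ge\ \frac{1}{\sqrt{dL}}.$$
   Context: $\rho({\bf A})=\lambda_{\max}^{1/2}({\bf A}^H{\bf A})$ is the spectral norm. *)

theory Defs
  imports "Jordan_Normal_Form.Schur_Decomposition"
begin

definition unitary_mat :: "nat \<Rightarrow> complex mat \<Rightarrow> bool" where
  "unitary_mat n U \<longleftrightarrow> U \<in> carrier_mat n n \<and> mat_adjoint U * U = 1\<^sub>m n \<and> U * mat_adjoint U = 1\<^sub>m n"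

text \<open>Spectral norm rho(A) = sqrt of the largest eigenvalue of A^H A (these eigenvalues are real).\<close>
definition spectral_norm :: "complex mat \<Rightarrow> real" where
  "spectral_norm A = sqrt (Max (Re ` {k. eigenvalue (mat_adjoint A * A) k}))"

text \<open>Column block number l (0-based) of width d: columns l*d, ..., l*d + d - 1.\<close>
definition col_block :: "nat \<Rightarrow> complex mat \<Rightarrow> nat \<Rightarrow> complex mat" where
  "col_block d A l = mat (dim_row A) d (\<lambda>(i, j). A $$ (i, l * d + j))"

definition block_coherence :: "nat \<Rightarrow> nat \<Rightarrow> complex mat \<Rightarrow> complex mat \<Rightarrow> real" where
  "block_coherence R d Phi Psi =
     Max {spectral_norm (mat_adjoint (col_block d Phi l) * col_block d Psi r) / real d | l r. l < R \<and> r < R}"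

end

theory Submission
  imports Defs
begin

text \<open>The matrix U = Phi^H Psi is unitary, so its squared Frobenius norm is L. Its R^2 square blocks
  of size d are exactly the matrices Phi[l]^H Psi[r], so one of them has squared Frobenius norm at
  least L / R^2 = d / R. For a d x d matrix M the squared Frobenius norm is the trace of M^H M, the sum
  of its d eigenvalues, hence at most d rho(M)^2. Thus rho(Phi[l]^H Psi[r]) \<ge> 1 / sqrt R for this
  pair, and dividing by d gives 1 / (d sqrt R) = 1 / sqrt (d L).\<close>

lemma dim_mat_adjoint [simp]:
  "dim_row (mat_adjoint A) = dim_col A" "dim_col (mat_adjoint A) = dim_row A"
  unfolding mat_adjoint_def by auto

lemma index_mat_adjoint [simp]:
  "i < dim_col A \<Longrightarrow> j < dim_row A \<Longrightarrow> mat_adjoint A $$ (i, j) = conjugate (A $$ (j, i))"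
  unfolding mat_adjoint_def by (simp add: mat_of_rows_index)

lemma mat_adjoint_adjoint:
  "mat_adjoint (mat_adjoint A) = (A :: 'a :: conjugatable_field mat)"
  by (intro eq_matI) auto

lemma mat_adjoint_mult:
  fixes A B :: "complex mat"
  assumes A: "A \<in> carrier_mat n m" and B: "B \<in> carrier_mat m k"
  shows "mat_adjoint (A * B) = mat_adjoint B * mat_adjoint A"
proof (rule eq_matI)
  fix i j
  assume "i < dim_row (mat_adjoint B * mat_adjoint A)" "j < dim_col (mat_adjoint B * mat_adjoint A)"
  then have i: "i < k" and j: "j < n" using A B by auto
  have "mat_adjoint (A * B) $$ (i, j) = cnj (\<Sum>l<m. A $$ (j, l) * B $$ (l, i))"
    using A B i j by (simp add: scalar_prod_def lessThan_atLeast0)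
  also have "\<dots> = (\<Sum>l<m. cnj (B $$ (l, i)) * cnj (A $$ (j, l)))"
    by (simp add: mult.commute)
  also have "\<dots> = (mat_adjoint B * mat_adjoint A) $$ (i, j)"
    using A B i j by (simp add: scalar_prod_def lessThan_atLeast0)
  finally show "mat_adjoint (A * B) $$ (i, j) = (mat_adjoint B * mat_adjoint A) $$ (i, j)" .
qed (use A B in auto)

lemma unitary_mat_adjoint_mult:
  assumes Phi: "unitary_mat n Phi" and Psi: "unitary_mat n Psi"
  shows "unitary_mat n (mat_adjoint Phi * Psi)"
proof -
  have cPhi: "Phi \<in> carrier_mat n n" and cPhiH: "mat_adjoint Phi \<in> carrier_mat n n"
    and PhiPhiH: "Phi * mat_adjoint Phi = 1\<^sub>m n" and PhiHPhi: "mat_adjoint Phi * Phi = 1\<^sub>m n"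
    using Phi unfolding unitary_mat_def by auto
  have cPsi: "Psi \<in> carrier_mat n n" and cPsiH: "mat_adjoint Psi \<in> carrier_mat n n"
    and PsiPsiH: "Psi * mat_adjoint Psi = 1\<^sub>m n" and PsiHPsi: "mat_adjoint Psi * Psi = 1\<^sub>m n"
    using Psi unfolding unitary_mat_def by auto
  have adj: "mat_adjoint (mat_adjoint Phi * Psi) = mat_adjoint Psi * Phi"
    using mat_adjoint_mult[OF cPhiH cPsi] by (simp add: mat_adjoint_adjoint)
  have "mat_adjoint Psi * Phi * (mat_adjoint Phi * Psi) = mat_adjoint Psi * ((Phi * mat_adjoint Phi) * Psi)"
    using cPhi cPhiH cPsi cPsiH by (simp add: assoc_mult_mat[of _ n n _ n _ n])
  also have "\<dots> = 1\<^sub>m n" using PhiPhiH PsiHPsi cPsi by simp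
  finally have left: "mat_adjoint Psi * Phi * (mat_adjoint Phi * Psi) = 1\<^sub>m n" .
  have "mat_adjoint Phi * Psi * (mat_adjoint Psi * Phi) = mat_adjoint Phi * ((Psi * mat_adjoint Psi) * Phi)"
    using cPhi cPhiH cPsi cPsiH by (simp add: assoc_mult_mat[of _ n n _ n _ n])
  also have "\<dots> = 1\<^sub>m n" using PsiPsiH PhiHPhi cPhi by simp
  finally have right: "mat_adjoint Phi * Psi * (mat_adjoint Psi * Phi) = 1\<^sub>m n" .
  show ?thesis
    unfolding unitary_mat_def adj using left right cPhiH cPsi by auto
qed

definition mat_trace :: "'a :: comm_ring_1 mat \<Rightarrow> 'a" where
  "mat_trace A = (\<Sum>i<dim_row A. A $$ (i, i))"

lemma mat_trace_mult_comm:
  fixes A B :: "'a :: comm_ring_1 mat"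
  assumes A: "A \<in> carrier_mat n m" and B: "B \<in> carrier_mat m n"
  shows "mat_trace (A * B) = mat_trace (B * A)"
proof -
  have "mat_trace (A * B) = (\<Sum>i<n. \<Sum>k<m. A $$ (i, k) * B $$ (k, i))"
    using A B by (simp add: mat_trace_def scalar_prod_def lessThan_atLeast0)
  also have "\<dots> = (\<Sum>k<m. \<Sum>i<n. B $$ (k, i) * A $$ (i, k))"
    by (subst sum.swap) (simp add: mult.commute)
  also have "\<dots> = mat_trace (B * A)"
    using A B by (simp add: mat_trace_def scalar_prod_def lessThan_atLeast0)
  finally show ?thesis .
qed

lemma mat_trace_similar_mat_wit:
  fixes A B :: "'a :: comm_ring_1 mat"
  assumes A: "A \<in> carrier_mat n n" and sim: "similar_mat_wit A B P Q"
  shows "mat_trace A = mat_trace B"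
proof -
  from similar_mat_witD2[OF A sim]
  have QP: "Q * P = 1\<^sub>m n" and AB: "A = P * B * Q"
    and B: "B \<in> carrier_mat n n" and P: "P \<in> carrier_mat n n" and Q: "Q \<in> carrier_mat n n"
    by auto
  have "mat_trace A = mat_trace (P * (B * Q))"
    using AB assoc_mult_mat[OF P B Q] by simp
  also have "\<dots> = mat_trace (B * Q * P)"
    using B P Q by (intro mat_trace_mult_comm) auto
  also have "\<dots> = mat_trace B"
    using assoc_mult_mat[OF B Q P] QP B by simp
  finally show ?thesis .
qed

lemma finite_eigenvalues:
  assumes "(A :: 'a :: field mat) \<in> carrier_mat n n"
  shows "finite {k. eigenvalue A k}"
proof -
  have "char_poly A \<noteq> 0" using degree_monic_char_poly[OF assms] by auto
  from poly_roots_finite[OF this] show ?thesis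
    using eigenvalue_root_char_poly[OF assms] by simp
qed

text \<open>The Schur form of A is similar to A and lists the roots es, with multiplicity, on its diagonal.\<close>
lemma mat_trace_eq_sum_char_poly_roots:
  fixes A :: "complex mat"
  assumes A: "A \<in> carrier_mat n n" and es: "char_poly A = (\<Prod>a\<leftarrow>es. [:- a, 1:])"
  shows "mat_trace A = sum_list es"
proof -
  obtain B P Q where schur: "schur_decomposition A es = (B, P, Q)"
    by (cases "schur_decomposition A es") auto
  from schur_decomposition[OF A es schur]
  have sim: "similar_mat_wit A B P Q" and diag: "diag_mat B = es" by blast+
  have "dim_row B = n" using similar_mat_witD2[OF A sim] by auto
  then have "mat_trace B = sum_list es"
    unfolding diag[symmetric] diag_mat_def
    by (simp add: mat_trace_def lessThan_atLeast0 interv_sum_list_conv_sum_set_nat)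
  with mat_trace_similar_mat_wit[OF A sim] show ?thesis by simp
qed

lemma Re_mat_trace_le_max_eigenvalue:
  fixes A :: "complex mat"
  assumes A: "A \<in> carrier_mat n n"
  shows "Re (mat_trace A) \<le> real n * Max (Re ` {k. eigenvalue A k})"
proof -
  obtain es where es: "char_poly A = (\<Prod>a\<leftarrow>es. [:- a, 1:])" and len: "length es = n"
    using char_poly_factorized[OF A] by blast
  have eig: "eigenvalue A (es ! i)" if "i < n" for i
    using that len eigenvalue_root_char_poly[OF A]
    by (auto simp: es poly_prod_list prod_list_zero_iff)
  have "Re (mat_trace A) = (\<Sum>i<n. Re (es ! i))"
    using mat_trace_eq_sum_char_poly_roots[OF A es] len
    by (simp add: sum_list_sum_nth lessThan_atLeast0 Re_sum)
  also have "\<dots> \<le> real (card {..<n}) * Max (Re ` {k. eigenvalue A k})"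
    using eig finite_eigenvalues[OF A] by (intro sum_bounded_above Max_ge) auto
  finally show ?thesis by simp
qed

definition frobenius_sq :: "complex mat \<Rightarrow> real" where
  "frobenius_sq M = (\<Sum>i<dim_row M. \<Sum>j<dim_col M. (cmod (M $$ (i, j)))\<^sup>2)"

lemma mat_trace_adjoint_mult_self:
  "mat_trace (mat_adjoint M * M) = of_real (frobenius_sq M)"
proof -
  have "mat_trace (mat_adjoint M * M) = (\<Sum>j<dim_col M. \<Sum>i<dim_row M. M $$ (i, j) * cnj (M $$ (i, j)))"
    by (simp add: mat_trace_def scalar_prod_def lessThan_atLeast0 mult.commute)
  also have "\<dots> = (\<Sum>j<dim_col M. \<Sum>i<dim_row M. of_real ((cmod (M $$ (i, j)))\<^sup>2))"
    by (simp only: complex_norm_square)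
  also have "\<dots> = of_real (frobenius_sq M)"
    unfolding frobenius_sq_def by (subst sum.swap) simp
  finally show ?thesis .
qed

lemma frobenius_sq_orthonormal_cols:
  assumes "mat_adjoint M * M = 1\<^sub>m m" and "M \<in> carrier_mat n m"
  shows "frobenius_sq M = real m"
proof -
  have "complex_of_real (frobenius_sq M) = of_nat m"
    using mat_trace_adjoint_mult_self[of M] assms by (simp add: mat_trace_def)
  then show ?thesis by (metis of_real_eq_iff of_real_of_nat_eq)
qed

lemma frobenius_sq_le_spectral_norm:
  assumes M: "M \<in> carrier_mat n n" and n: "n > 0"
  shows "sqrt (frobenius_sq M / n) \<le> spectral_norm M"
proof -
  have "frobenius_sq M = Re (mat_trace (mat_adjoint M * M))"
    by (simp add: mat_trace_adjoint_mult_self)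
  also have "\<dots> \<le> real n * Max (Re ` {k. eigenvalue (mat_adjoint M * M) k})"
    using M by (intro Re_mat_trace_le_max_eigenvalue) auto
  finally have "frobenius_sq M / n \<le> Max (Re ` {k. eigenvalue (mat_adjoint M * M) k})"
    using n by (simp add: divide_le_eq mult.commute)
  then show ?thesis unfolding spectral_norm_def by (rule real_sqrt_le_mono)
qed

definition square_block :: "nat \<Rightarrow> 'a mat \<Rightarrow> nat \<Rightarrow> nat \<Rightarrow> 'a mat" where
  "square_block d A l r = mat d d (\<lambda>(a, b). A $$ (l * d + a, r * d + b))"

lemma block_index_less:
  assumes "l < (R :: nat)" and "a < d"
  shows "l * d + a < R * d"
proof -
  have "l * d + a < Suc l * d" using assms by simp
  also have "\<dots> \<le> R * d" using assms by (intro mult_le_mono1) simp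
  finally show ?thesis .
qed

lemma adjoint_col_block_mult_col_block:
  assumes Phi: "Phi \<in> carrier_mat n (R * d)" and Psi: "Psi \<in> carrier_mat n (R * d)"
    and "l < R" and "r < R"
  shows "mat_adjoint (col_block d Phi l) * col_block d Psi r = square_block d (mat_adjoint Phi * Psi) l r"
  using assms block_index_less[of l R _ d] block_index_less[of r R _ d]
  by (intro eq_matI) (auto simp: col_block_def square_block_def scalar_prod_def)

lemma frobenius_sq_square_blocks:
  assumes "A \<in> carrier_mat (R * d) (R * d)"
  shows "frobenius_sq A = (\<Sum>(l, r) \<in> {..<R} \<times> {..<R}. frobenius_sq (square_block d A l r))"
proof -
  have regroup: "(\<Sum>i<R * d. g i) = (\<Sum>l<R. \<Sum>a<d. g (l * d + a))" for g :: "nat \<Rightarrow> real"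
    by (simp add: sum.nat_group[symmetric] sum.shift_bounds_nat_ivl[of g 0, simplified]
        atLeast0LessThan add.commute)
  have "frobenius_sq A = (\<Sum>l<R. \<Sum>a<d. \<Sum>r<R. \<Sum>b<d. (cmod (A $$ (l * d + a, r * d + b)))\<^sup>2)"
    using assms by (simp add: frobenius_sq_def regroup)
  also have "\<dots> = (\<Sum>l<R. \<Sum>r<R. \<Sum>a<d. \<Sum>b<d. (cmod (A $$ (l * d + a, r * d + b)))\<^sup>2)"
    by (intro sum.cong refl sum.swap)
  also have "\<dots> = (\<Sum>l<R. \<Sum>r<R. frobenius_sq (square_block d A l r))"
    by (simp add: frobenius_sq_def square_block_def)
  also have "\<dots> = (\<Sum>(l, r) \<in> {..<R} \<times> {..<R}. frobenius_sq (square_block d A l r))"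
    by (rule sum.cartesian_product)
  finally show ?thesis .
qed

lemma exists_ge_average:
  fixes f :: "'a \<Rightarrow> real"
  assumes "finite A" and "A \<noteq> {}"
  shows "\<exists>x\<in>A. sum f A / card A \<le> f x"
proof (rule ccontr)
  assume "\<not> ?thesis"
  then have "sum f A < card A * (sum f A / card A)"
    using assms by (intro sum_bounded_above_strict) (auto simp: card_gt_0_iff not_le)
  then show False using assms by simp
qed

theorem proposition4:
  fixes R d L :: nat and Phi Psi :: "complex mat"
  assumes "R > 0" and "d > 0" and "L = R * d"
    and "unitary_mat L Phi" and "unitary_mat L Psi"
  shows "block_coherence R d Phi Psi \<ge> 1 / sqrt (real d * real L)"
proof -
  define U where "U = mat_adjoint Phi * Psi"
  have "unitary_mat L U"
    unfolding U_def using assms(4,5) by (rule unitary_mat_adjoint_mult)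
  then have "U \<in> carrier_mat (R * d) (R * d)" and "frobenius_sq U = real L"
    using assms(3) frobenius_sq_orthonormal_cols[of U L L] by (auto simp: unitary_mat_def)
  then have "\<exists>(l, r) \<in> {..<R} \<times> {..<R}. real L / (R * R) \<le> frobenius_sq (square_block d U l r)"
    using exists_ge_average[of "{..<R} \<times> {..<R}" "\<lambda>(l, r). frobenius_sq (square_block d U l r)"]
      assms(1) by (simp add: frobenius_sq_square_blocks lessThan_empty_iff)
  then obtain l r where lr: "l < R" "r < R"
    and big: "real L / (R * R) \<le> frobenius_sq (square_block d U l r)"
    by blast
  have "1 / sqrt (real R) = sqrt (1 / real R)"
    by (simp add: real_sqrt_divide)
  also have "\<dots> \<le> sqrt (frobenius_sq (square_block d U l r) / d)"
    using big assms(1-3) by (intro real_sqrt_le_mono) (simp add: field_simps)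
  also have "\<dots> \<le> spectral_norm (square_block d U l r)"
    using assms(2) by (intro frobenius_sq_le_spectral_norm) (simp_all add: square_block_def)
  finally have "1 / sqrt (real d * real L) \<le> spectral_norm (square_block d U l r) / d"
    using assms(1-3) by (simp add: real_sqrt_mult field_simps)
  also have "square_block d U l r = mat_adjoint (col_block d Phi l) * col_block d Psi r"
    using assms(3-5) lr adjoint_col_block_mult_col_block[of Phi "R * d" R d Psi l r]
    unfolding U_def unitary_mat_def by auto
  also have "spectral_norm \<dots> / d \<le> block_coherence R d Phi Psi"
    unfolding block_coherence_def using lr by (intro Max_ge finite_image_set2) auto
  finally show ?thesis .
qed

end
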